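(* The set $\mathfrak T=\mathfrak T_\infty\cup\mathfrak T_\boxplus$ of green graph rewriting rules finitely leads to the red spider.
   Context: Fix a positive integer $s$ and let $\mathbb S=\{1,\dots,s\}$ and $\bar{\mathbb S}=\mathbb S\cup\{\emptyset\}$ (elements of $\mathbb S$ are natural numbers, called labels). A green graph is a (finite or infinite) relational structure over the signature consisting of binary relations $H_i$, $i\in\bar{\mathbb S}$; an atom $H_i(x,y)$ is called an edge from $x$ to $y$ labelled $i$. A green graph rewriting rule is a first-order sentence of one of the following two kinds, where $I_1,I_2,I_3,I_4\in\bar{\mathbb S}\setminus\{3,4\}$, $I_1\neq I_3$ and $I_2\neq I_4$: (end-sharing rule) $[I_1,I_2\leftrightarrow I_3,I_4]_{\mathrm{end}}$ denotes $\forall x,x'\,\big[(\exists y\,H_{I_1}(x,y)\wedge H_{I_2}(x',y))\Leftrightarrow(\exists y\,H_{I_3}(x,y)\wedge H_{I_4}(x',y))\big]$; (start-sharing rule) $[I_1,I_2\leftrightarrow I_3,I_4]_{\mathrm{start}}$ denotes $\forall y,y'\,\big[(\exists x\,H_{I_1}(x,y)\wedge H_{I_2}(x,y'))\Leftrightarrow(\exists x\,H_{I_3}(x,y)\wedge H_{I_4}(x,y'))\big]$. A green graph contains a 1-2 pattern if it has edges $H_1(a,b)$ and $H_2(a',b)$ for some vertices $a,a',b$. A set $\mathcal T$ of green graph rewriting rules leads to the red spider (resp. finitely leads to the red spider) if every green graph (resp. every finite green graph) $\mathbb D$ with $\mathbb D\models\mathcal T$ which contains at least one edge labelled $\emptyset$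 also contains a 1-2 pattern. Labels: $\alpha,\beta_0,\eta_0$ are pairwise distinct even elements and $\beta_1,\eta_1$ distinct odd elements of $\mathbb S\setminus\{1,2,3,4\}$. Further, the 32 codes $\langle x,\theta,\delta,\epsilon\rangle$ with $x\in\{n,e,s,w\}$, $\theta\in\{\alpha,\beta\}$, $\delta\in\{d,\bar d\}$, $\epsilon\in\{b,\bar b\}$ are identified injectively with elements of $\mathbb S\setminus\{3,4,\alpha,\beta_0,\beta_1,\eta_0,\eta_1\}$, in such a way that $\langle n,\alpha,\bar d,\bar b\rangle=1$ and $\langle w,\alpha,\bar d,\bar b\rangle=2$. $\mathfrak T_\infty$ consists of the three rules $[\emptyset,\emptyset\leftrightarrow\alpha,\eta_1]_{\mathrm{end}}$, $[\emptyset,\eta_1\leftrightarrow\eta_0,\beta_1]_{\mathrm{start}}$, $[\emptyset,\eta_0\leftrightarrow\eta_1,\beta_0]_{\mathrm{end}}$. $\mathfrak T_\boxplus$ consists of the following 41 rules: $[\beta_0,\beta_0\leftrightarrow\langle n,\beta,d,b\rangle,\langle w,\beta,d,b\rangle]_{\mathrm{end}}$; $[\beta_1,\langle n,\beta,d,b\rangle\leftrightarrow\langle s,\beta,\bar d,b\rangle,\langle e,\beta,d,\bar b\rangle]_{\mathrm{start}}$; $[\beta_0,\langle s,\beta,\bar d,b\rangle\leftrightarrow\langle n,\beta,\bar d,b\rangle,\langle w,\beta,\bar d,\bar b\rangle]_{\mathrm{end}}$; $[\beta_1,\langle n,\beta,\bar d,b\rangle\leftrightarrow\langle s,\beta,\bar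 d,b\rangle,\langle e,\beta,\bar d,\bar b\rangle]_{\mathrm{start}}$; $[\alpha,\langle s,\beta,\bar d,b\rangle\leftrightarrow\langle n,\beta,\bar d,b\rangle,\langle w,\alpha,\bar d,\bar b\rangle]_{\mathrm{end}}$; $[\beta_1,\langle w,\beta,d,b\rangle\leftrightarrow\langle e,\beta,\bar d,b\rangle,\langle s,\beta,d,\bar b\rangle]_{\mathrm{start}}$; $[\beta_0,\langle e,\beta,\bar d,b\rangle\leftrightarrow\langle w,\beta,\bar d,b\rangle,\langle n,\beta,\bar d,\bar b\rangle]_{\mathrm{end}}$; $[\beta_1,\langle w,\beta,\bar d,b\rangle\leftrightarrow\langle e,\beta,\bar d,b\rangle,\langle s,\beta,\bar d,\bar b\rangle]_{\mathrm{start}}$; $[\alpha,\langle e,\beta,\bar d,b\rangle\leftrightarrow\langle w,\beta,\bar d,b\rangle,\langle n,\alpha,\bar d,\bar b\rangle]_{\mathrm{end}}$; and, for all $X,Y\in\{d,\bar d\}$ and $\Theta,\Omega\in\{\alpha,\beta\}$, the rules $[\langle e,\Theta,X,\bar b\rangle,\langle s,\Omega,Y,\bar b\rangle\leftrightarrow\langle n,\Omega,X,\bar b\rangle,\langle w,\Theta,Y,\bar b\rangle]_{\mathrm{end}}$ and $[\langle w,\Theta,X,\bar b\rangle,\langle n,\Omega,Y,\bar b\rangle\leftrightarrow\langle s,\Omega,X,\bar b\rangle,\langle e,\Theta,Y,\bar b\rangle]_{\mathrm{start}}$. *)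

theory Defs
  imports Main
begin

text \<open>Labels of \<open>\<bar>S\<close>: \<open>None\<close> plays the role of the empty label, \<open>Some i\<close> the label \<open>i \<in> S\<close>.
  A green graph on vertex type \<open>'v\<close> is given by \<open>H :: nat option \<Rightarrow> 'v \<Rightarrow> 'v \<Rightarrow> bool\<close>,
  where \<open>H I x y\<close> is the atom \<open>H_I(x,y)\<close>.\<close>

type_synonym label = "nat option"

datatype rule =
    EndRule label label label label
  | StartRule label label label label

fun sat_rule :: "(label \<Rightarrow> 'v \<Rightarrow> 'v \<Rightarrow> bool) \<Rightarrow> rule \<Rightarrow> bool" where
  "sat_rule H (EndRule I1 I2 I3 I4) =
     (\<forall>x x'. (\<exists>y. H I1 x y \<and> H I2 x' y) \<longleftrightarrow> (\<exists>y. H I3 x y \<and> H I4 x' y))"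
| "sat_rule H (StartRule I1 I2 I3 I4) =
     (\<forall>y y'. (\<exists>x. H I1 x y \<and> H I2 x y') \<longleftrightarrow> (\<exists>x. H I3 x y \<and> H I4 x y'))"

definition models :: "(label \<Rightarrow> 'v \<Rightarrow> 'v \<Rightarrow> bool) \<Rightarrow> rule set \<Rightarrow> bool" where
  "models H T \<longleftrightarrow> (\<forall>r\<in>T. sat_rule H r)"

definition has_empty_edge :: "(label \<Rightarrow> 'v \<Rightarrow> 'v \<Rightarrow> bool) \<Rightarrow> bool" where
  "has_empty_edge H \<longleftrightarrow> (\<exists>x y. H None x y)"

definition has_12_pattern :: "(label \<Rightarrow> 'v \<Rightarrow> 'v \<Rightarrow> bool) \<Rightarrow> bool" where
  "has_12_pattern H \<longleftrightarrow> (\<exists>a a' b. H (Some 1) a b \<and> H (Some 2) a' b)"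

text \<open>Finitely leads to the red spider, for green graphs whose universe is the (finite) type \<open>'v\<close>.\<close>
definition leads_to_red_spider_on :: "'v itself \<Rightarrow> rule set \<Rightarrow> bool" where
  "leads_to_red_spider_on _ T \<longleftrightarrow>
     (\<forall>H :: label \<Rightarrow> 'v \<Rightarrow> 'v \<Rightarrow> bool. models H T \<and> has_empty_edge H \<longrightarrow> has_12_pattern H)"

text \<open>Codes \<open>\<langle>x,\<theta>,\<delta>,\<epsilon>\<rangle>\<close>: \<open>\<delta> = True\<close> means \<open>d\<close>, \<open>False\<close> means \<open>\<bar>d\<close>;
  \<open>\<epsilon> = True\<close> means \<open>b\<close>, \<open>False\<close> means \<open>\<bar>b\<close>.\<close>
datatype dir = DN | DE | DS | DW
datatype theta = TAlpha | TBeta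

definition T_inf :: "nat \<Rightarrow> nat \<Rightarrow> nat \<Rightarrow> nat \<Rightarrow> nat \<Rightarrow> rule set" where
  "T_inf \<alpha> \<beta>0 \<beta>1 \<eta>0 \<eta>1 =
     {EndRule None None (Some \<alpha>) (Some \<eta>1),
      StartRule None (Some \<eta>1) (Some \<eta>0) (Some \<beta>1),
      EndRule None (Some \<eta>0) (Some \<eta>1) (Some \<beta>0)}"

definition T_box :: "(dir \<Rightarrow> theta \<Rightarrow> bool \<Rightarrow> bool \<Rightarrow> nat) \<Rightarrow> nat \<Rightarrow> nat \<Rightarrow> nat \<Rightarrow> rule set" where
  "T_box c \<alpha> \<beta>0 \<beta>1 =
     (let C = (\<lambda>x t dl ep. Some (c x t dl ep)) in
     {EndRule (Some \<beta>0) (Some \<beta>0) (C DN TBeta True True) (C DW TBeta True True),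
      StartRule (Some \<beta>1) (C DN TBeta True True) (C DS TBeta False True) (C DE TBeta True False),
      EndRule (Some \<beta>0) (C DS TBeta False True) (C DN TBeta False True) (C DW TBeta False False),
      StartRule (Some \<beta>1) (C DN TBeta False True) (C DS TBeta False True) (C DE TBeta False False),
      EndRule (Some \<alpha>) (C DS TBeta False True) (C DN TBeta False True) (C DW TAlpha False False),
      StartRule (Some \<beta>1) (C DW TBeta True True) (C DE TBeta False True) (C DS TBeta True False),
      EndRule (Some \<beta>0) (C DE TBeta False True) (C DW TBeta False True) (C DN TBeta False False),
      StartRule (Some \<beta>1) (C DW TBeta False True) (C DE TBeta False True) (C DS TBeta False False),
      EndRule (Some \<alpha>) (C DE TBeta False True) (C DW TBeta False True) (C DN TAlpha False False)}
     \<union> {EndRule (C DE \<Theta> X False) (C DS \<Omega> Y False) (C DN \<Omega> X False) (C DW \<Theta> Y False)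
         | X Y \<Theta> \<Omega>. True}
     \<union> {StartRule (C DW \<Theta> X False) (C DN \<Omega> Y False) (C DS \<Omega> X False) (C DE \<Theta> Y False)
         | X Y \<Theta> \<Omega>. True})"

end

theory Submission
  imports Defs
begin

text \<open>From an empty edge the rules of \<open>T_inf\<close> grow an infinite ladder: vertices
  \<open>x\<^sub>0, x\<^sub>1, \<dots>\<close> and \<open>y\<^sub>0, y\<^sub>1, \<dots>\<close> with edges \<open>\<beta>\<^sub>1(x\<^sub>k\<^sub>+\<^sub>1, y\<^sub>k)\<close>,
  \<open>\<beta>\<^sub>0(x\<^sub>k, y\<^sub>k)\<close> for \<open>k > 0\<close> and \<open>\<alpha>(x\<^sub>0, y\<^sub>0)\<close>. In a finite graph two rungs coincide,
  \<open>x\<^sub>m = x\<^sub>n\<close> with \<open>m \<noteq> n\<close>. Starting at this rung, the rules of \<open>T_box\<close> walk down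
  the ladder twice, producing the bottom side (length \<open>2m\<close>) and the right side
  (length \<open>2n\<close>) of a rectangle with a common corner; the tiling rules then fill the rectangle
  cell by cell. Its top left corner carries the codes \<open>\<langle>n,\<alpha>,\<bar>d,\<bar>b\<rangle> = 1\<close> and
  \<open>\<langle>w,\<alpha>,\<bar>d,\<bar>b\<rangle> = 2\<close> on two edges into a common vertex, a 1-2 pattern.
  Only these two code values are used.\<close>

fun transpose_dir :: "dir \<Rightarrow> dir" where
  "transpose_dir DN = DW"
| "transpose_dir DW = DN"
| "transpose_dir DE = DS"
| "transpose_dir DS = DE"

fun swap_rule :: "rule \<Rightarrow> rule" where
  "swap_rule (EndRule I1 I2 I3 I4) = EndRule I2 I1 I4 I3"
| "swap_rule (StartRule I1 I2 I3 I4) = StartRule I2 I1 I4 I3"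

lemma sat_swap_rule: "sat_rule H (swap_rule r) \<longleftrightarrow> sat_rule H r"
  by (cases r) (simp_all, blast+)

lemma T_box_transpose:
  "r \<in> T_box (c \<circ> transpose_dir) \<alpha> \<beta>0 \<beta>1 \<Longrightarrow>
    r \<in> T_box c \<alpha> \<beta>0 \<beta>1 \<or> swap_rule r \<in> T_box c \<alpha> \<beta>0 \<beta>1"
  unfolding T_box_def Let_def
  apply (elim UnE)
    apply (elim insertE emptyE; simp only: comp_apply transpose_dir.simps swap_rule.simps
        insert_iff Un_iff rule.inject simp_thms)
   apply (rule disjI2, rule UnI1, rule UnI2, clarsimp, blast)
  apply (rule disjI2, rule UnI2, clarsimp, blast)
  done

lemma models_T_box_transpose:
  "models H (T_box c \<alpha> \<beta>0 \<beta>1) \<Longrightarrow> models H (T_box (c \<circ> transpose_dir) \<alpha> \<beta>0 \<beta>1)"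
  unfolding models_def using T_box_transpose sat_swap_rule by metis

definition ladder ::
  "(label \<Rightarrow> 'v \<Rightarrow> 'v \<Rightarrow> bool) \<Rightarrow> nat \<Rightarrow> nat \<Rightarrow> nat \<Rightarrow> (nat \<Rightarrow> 'v) \<Rightarrow> (nat \<Rightarrow> 'v) \<Rightarrow> bool"
  where "ladder H \<alpha> \<beta>0 \<beta>1 xs ys \<longleftrightarrow>
    (\<forall>k. H (Some (if k = 0 then \<alpha> else \<beta>0)) (xs k) (ys k) \<and> H (Some \<beta>1) (xs (Suc k)) (ys k))"

lemma ladder_of_empty_edge:
  assumes "models H (T_inf \<alpha> \<beta>0 \<beta>1 \<eta>0 \<eta>1)" and "H None a b"
  shows "\<exists>xs ys. ladder H \<alpha> \<beta>0 \<beta>1 xs ys"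
proof -
  have A: "sat_rule H (EndRule None None (Some \<alpha>) (Some \<eta>1))"
    and B: "sat_rule H (StartRule None (Some \<eta>1) (Some \<eta>0) (Some \<beta>1))"
    and C: "sat_rule H (EndRule None (Some \<eta>0) (Some \<eta>1) (Some \<beta>0))"
    using assms(1) by (auto simp: models_def T_inf_def)
  from A assms(2) obtain y0 where y0: "H (Some \<alpha>) a y0" "H (Some \<eta>1) a y0"
    by auto
  from B assms(2) have "\<forall>y. \<exists>x. H (Some \<eta>1) a y \<longrightarrow> H (Some \<eta>0) x b \<and> H (Some \<beta>1) x y"
    by auto
  then obtain f where f: "\<And>y. H (Some \<eta>1) a y \<Longrightarrow> H (Some \<eta>0) (f y) b \<and> H (Some \<beta>1) (f y) y"
    by metis
  from C assms(2) have "\<forall>x. \<exists>y. H (Some \<eta>0) x b \<longrightarrow> H (Some \<eta>1) a y \<and> H (Some \<beta>0) x y"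
    by auto
  then obtain g where g: "\<And>x. H (Some \<eta>0) x b \<Longrightarrow> H (Some \<eta>1) a (g x) \<and> H (Some \<beta>0) x (g x)"
    by metis
  define ys where "ys k = ((g \<circ> f) ^^ k) y0" for k
  define xs where "xs k = (if k = 0 then a else f (ys (k - 1)))" for k
  have \<eta>1: "H (Some \<eta>1) a (ys k)" for k
    by (induction k) (use y0 f g in \<open>simp_all add: ys_def\<close>)
  have "ladder H \<alpha> \<beta>0 \<beta>1 xs ys"
    unfolding ladder_def
  proof
    fix k
    show "H (Some (if k = 0 then \<alpha> else \<beta>0)) (xs k) (ys k) \<and> H (Some \<beta>1) (xs (Suc k)) (ys k)"
      using y0 f g \<eta>1 by (cases k) (simp_all add: xs_def ys_def)
  qed
  then show ?thesis by blast
qed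

text \<open>The horizontal edge \<open>(p, q) \<rightarrow> (p + 1, q)\<close> and the vertical edge
  \<open>(p, q) \<rightarrow> (p, q + 1)\<close> of a grid are realised, in a checkerboard pattern, as forward
  \<open>e\<close>- resp. \<open>n\<close>-edges or as backward \<open>w\<close>- resp. \<open>s\<close>-edges, so that every cell matches an
  end-sharing or a start-sharing tiling rule.\<close>

definition grid_hedge :: "(label \<Rightarrow> 'v \<Rightarrow> 'v \<Rightarrow> bool) \<Rightarrow> (dir \<Rightarrow> theta \<Rightarrow> bool \<Rightarrow> bool \<Rightarrow> nat) \<Rightarrow>
    nat \<Rightarrow> nat \<Rightarrow> 'v \<Rightarrow> 'v \<Rightarrow> theta \<Rightarrow> bool \<Rightarrow> bool"
  where "grid_hedge H c p q u w \<theta> \<delta> =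
    (if odd (p + q) then H (Some (c DE \<theta> \<delta> False)) u w else H (Some (c DW \<theta> \<delta> False)) w u)"

definition grid_vedge :: "(label \<Rightarrow> 'v \<Rightarrow> 'v \<Rightarrow> bool) \<Rightarrow> (dir \<Rightarrow> theta \<Rightarrow> bool \<Rightarrow> bool \<Rightarrow> nat) \<Rightarrow>
    nat \<Rightarrow> nat \<Rightarrow> 'v \<Rightarrow> 'v \<Rightarrow> theta \<Rightarrow> bool \<Rightarrow> bool"
  where "grid_vedge H c p q u w \<theta> \<delta> =
    (if odd (p + q) then H (Some (c DN \<theta> \<delta> False)) u w else H (Some (c DS \<theta> \<delta> False)) w u)"

lemma grid_hedge_transpose:
  "odd (p + q) \<longleftrightarrow> even (p' + q') \<Longrightarrow>
    grid_hedge H (c \<circ> transpose_dir) p q u w \<theta> \<delta> \<longleftrightarrow> grid_vedge H c p' q' w u \<theta> \<delta>"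
  by (simp add: grid_hedge_def grid_vedge_def)

locale box_model =
  fixes H :: "label \<Rightarrow> 'v \<Rightarrow> 'v \<Rightarrow> bool"
    and c :: "dir \<Rightarrow> theta \<Rightarrow> bool \<Rightarrow> bool \<Rightarrow> nat"
    and \<alpha> \<beta>0 \<beta>1 :: nat
  assumes models_T_box: "models H (T_box c \<alpha> \<beta>0 \<beta>1)"
begin

lemma end_rule:
  assumes "EndRule I1 I2 I3 I4 \<in> T_box c \<alpha> \<beta>0 \<beta>1" and "H I1 x y" and "H I2 x' y"
  shows "\<exists>y. H I3 x y \<and> H I4 x' y"
  using assms models_T_box by (fastforce simp: models_def)

lemma start_rule:
  assumes "StartRule I1 I2 I3 I4 \<in> T_box c \<alpha> \<beta>0 \<beta>1" and "H I1 x y" and "H I2 x y'"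
  shows "\<exists>x. H I3 x y \<and> H I4 x y'"
  using assms models_T_box by (fastforce simp: models_def)

lemma tile_cell:
  assumes "grid_hedge H c p q u0 u1 \<theta> \<delta>1" and "grid_vedge H c (Suc p) q u1 w1 \<omega> \<delta>2"
  shows "\<exists>w0. grid_vedge H c p q u0 w0 \<omega> \<delta>1 \<and> grid_hedge H c p (Suc q) w0 w1 \<theta> \<delta>2"
proof (cases "odd (p + q)")
  case True
  have "EndRule (Some (c DE \<theta> \<delta>1 False)) (Some (c DS \<omega> \<delta>2 False))
      (Some (c DN \<omega> \<delta>1 False)) (Some (c DW \<theta> \<delta>2 False)) \<in> T_box c \<alpha> \<beta>0 \<beta>1"
    unfolding T_box_def Let_def by (rule UnI1, rule UnI2) blast
  from end_rule[OF this] show ?thesis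
    using assms True by (auto simp: grid_hedge_def grid_vedge_def)
next
  case False
  have "StartRule (Some (c DW \<theta> \<delta>1 False)) (Some (c DN \<omega> \<delta>2 False))
      (Some (c DS \<omega> \<delta>1 False)) (Some (c DE \<theta> \<delta>2 False)) \<in> T_box c \<alpha> \<beta>0 \<beta>1"
    unfolding T_box_def Let_def by (rule UnI2) blast
  from start_rule[OF this] show ?thesis
    using assms False by (auto simp: grid_hedge_def grid_vedge_def)
qed

lemma tile_row:
  assumes "\<forall>p<M. grid_hedge H c p q (r p) (r (Suc p)) (\<theta> p) (D (p + q))"
    and "grid_vedge H c M q (r M) w (\<omega> q) (D (M + q))"
  shows "\<exists>r'. r' M = w \<and>
    (\<forall>p<M. grid_hedge H c p (Suc q) (r' p) (r' (Suc p)) (\<theta> p) (D (p + Suc q))) \<and>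
    (\<forall>p\<le>M. grid_vedge H c p q (r p) (r' p) (\<omega> q) (D (p + q)))"
  using assms
proof (induction M arbitrary: w)
  case 0
  then show ?case by auto
next
  case (Suc M)
  from Suc.prems have "grid_hedge H c M q (r M) (r (Suc M)) (\<theta> M) (D (M + q))"
    by simp
  from tile_cell[OF this Suc.prems(2)] obtain w0 where w0:
    "grid_vedge H c M q (r M) w0 (\<omega> q) (D (M + q))"
    "grid_hedge H c M (Suc q) w0 w (\<theta> M) (D (Suc M + q))"
    by blast
  from Suc.IH[OF _ w0(1)] Suc.prems(1) obtain r' where r':
    "r' M = w0"
    "\<forall>p<M. grid_hedge H c p (Suc q) (r' p) (r' (Suc p)) (\<theta> p) (D (p + Suc q))"
    "\<forall>p\<le>M. grid_vedge H c p q (r p) (r' p) (\<omega> q) (D (p + q))"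
    by auto
  show ?case
    by (rule exI[of _ "r'(Suc M := w)"]) (use r' w0 Suc.prems in \<open>auto simp: less_Suc_eq le_Suc_eq\<close>)
qed

lemma tile_rectangle:
  assumes row: "\<forall>p<M. grid_hedge H c p 0 (r p) (r (Suc p)) (\<theta> p) (D p)"
    and col: "\<forall>q<K. grid_vedge H c M q (col q) (col (Suc q)) (\<omega> q) (D (M + q))"
    and corner: "col 0 = r M"
  shows "\<exists>g. (\<forall>p<M. \<forall>q\<le>K. grid_hedge H c p q (g p q) (g (Suc p) q) (\<theta> p) (D (p + q))) \<and>
    (\<forall>p\<le>M. \<forall>q<K. grid_vedge H c p q (g p q) (g p (Suc q)) (\<omega> q) (D (p + q)))"
proof -
  have "\<exists>g. (\<forall>q\<le>K. g M q = col q) \<and>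
    (\<forall>p<M. \<forall>q\<le>K. grid_hedge H c p q (g p q) (g (Suc p) q) (\<theta> p) (D (p + q))) \<and>
    (\<forall>p\<le>M. \<forall>q<K. grid_vedge H c p q (g p q) (g p (Suc q)) (\<omega> q) (D (p + q)))"
    using col
  proof (induction K)
    case 0
    show ?case
      by (rule exI[of _ "\<lambda>p q. r p"]) (use row corner in auto)
  next
    case (Suc K)
    then obtain g where g: "\<forall>q\<le>K. g M q = col q"
      "\<forall>p<M. \<forall>q\<le>K. grid_hedge H c p q (g p q) (g (Suc p) q) (\<theta> p) (D (p + q))"
      "\<forall>p\<le>M. \<forall>q<K. grid_vedge H c p q (g p q) (g p (Suc q)) (\<omega> q) (D (p + q))"
      by auto
    have row_K: "\<forall>p<M. grid_hedge H c p K (g p K) (g (Suc p) K) (\<theta> p) (D (p + K))"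
      using g(2) by simp
    have col_K: "grid_vedge H c M K (g M K) (col (Suc K)) (\<omega> K) (D (M + K))"
      using g(1) Suc.prems by simp
    obtain r' where r': "r' M = col (Suc K)"
      "\<forall>p<M. grid_hedge H c p (Suc K) (r' p) (r' (Suc p)) (\<theta> p) (D (p + Suc K))"
      "\<forall>p\<le>M. grid_vedge H c p K (g p K) (r' p) (\<omega> K) (D (p + K))"
      using tile_row[where q = K and D = D and \<theta> = \<theta> and \<omega> = \<omega>, OF row_K col_K] by blast
    show ?case
      by (rule exI[of _ "\<lambda>p q. if q = Suc K then r' p else g p q"])
        (use g r' in \<open>auto simp: le_Suc_eq less_Suc_eq\<close>)
  qed
  then show ?thesis by blast
qed

lemma ladder_step:
  assumes ladder: "ladder H \<alpha> \<beta>0 \<beta>1 xs ys"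
    and north: "H (Some (c DN TBeta \<delta> True)) (xs (Suc k)) u"
  shows "\<exists>v w. H (Some (c DE TBeta \<delta> False)) v u \<and>
    H (Some (c DW (if k = 0 then TAlpha else TBeta) False False)) v w \<and>
    H (Some (c DN TBeta False True)) (xs k) w"
proof -
  from ladder have rung: "H (Some (if k = 0 then \<alpha> else \<beta>0)) (xs k) (ys k)"
    and \<beta>1: "H (Some \<beta>1) (xs (Suc k)) (ys k)"
    by (auto simp: ladder_def)
  have "StartRule (Some \<beta>1) (Some (c DN TBeta \<delta> True))
      (Some (c DS TBeta False True)) (Some (c DE TBeta \<delta> False)) \<in> T_box c \<alpha> \<beta>0 \<beta>1"
    by (cases \<delta>) (simp_all add: T_box_def)
  from start_rule[OF this \<beta>1 north] obtain v where v:
    "H (Some (c DS TBeta False True)) v (ys k)" "H (Some (c DE TBeta \<delta> False)) v u"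
    by blast
  have "EndRule (Some (if k = 0 then \<alpha> else \<beta>0)) (Some (c DS TBeta False True))
      (Some (c DN TBeta False True)) (Some (c DW (if k = 0 then TAlpha else TBeta) False False))
      \<in> T_box c \<alpha> \<beta>0 \<beta>1"
    by (simp add: T_box_def)
  from end_rule[OF this rung v(1)] v(2) show ?thesis
    by blast
qed

lemma ladder_row:
  assumes ladder: "ladder H \<alpha> \<beta>0 \<beta>1 xs ys"
    and "H (Some (c DN TBeta \<delta> True)) (xs k) u"
  shows "\<exists>r. r (2 * k) = u \<and> (\<forall>p<2 * k. grid_hedge H c p 0 (r p) (r (Suc p))
    (if p = 0 then TAlpha else TBeta) (\<delta> \<and> Suc p = 2 * k))"
  using assms(2)
proof (induction k arbitrary: u \<delta>)
  case 0
  then show ?case by auto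
next
  case (Suc k)
  from ladder_step[OF ladder Suc.prems] obtain v w where
    east: "H (Some (c DE TBeta \<delta> False)) v u"
    and west: "H (Some (c DW (if k = 0 then TAlpha else TBeta) False False)) v w"
    and north: "H (Some (c DN TBeta False True)) (xs k) w"
    by blast
  from Suc.IH[OF north] obtain r where r: "r (2 * k) = w"
    "\<forall>p<2 * k. grid_hedge H c p 0 (r p) (r (Suc p)) (if p = 0 then TAlpha else TBeta) False"
    by auto
  define r' where "r' = r(Suc (2 * k) := v, 2 * Suc k := u)"
  show ?case
  proof (intro exI[of _ r'] conjI allI impI)
    show "r' (2 * Suc k) = u"
      by (simp add: r'_def)
  next
    fix p
    assume "p < 2 * Suc k"
    then consider "p < 2 * k" | "p = 2 * k" | "p = Suc (2 * k)"
      by (auto simp: less_Suc_eq)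
    then show "grid_hedge H c p 0 (r' p) (r' (Suc p))
      (if p = 0 then TAlpha else TBeta) (\<delta> \<and> Suc p = 2 * Suc k)"
    proof cases
      case 1
      then show ?thesis using r(2) by (simp add: r'_def)
    next
      case 2
      then show ?thesis using r(1) west by (simp add: r'_def grid_hedge_def)
    next
      case 3
      then show ?thesis using east by (simp add: r'_def grid_hedge_def)
    qed
  qed
qed

text \<open>The right side of the rectangle is the bottom side built in the transposed model, read
  backwards.\<close>

lemma ladder_column:
  assumes ladder: "ladder H \<alpha> \<beta>0 \<beta>1 xs ys"
    and west: "H (Some (c DW TBeta True True)) (xs n) z"
    and "even M"
  shows "\<exists>col. col 0 = z \<and> (\<forall>q<2 * n. grid_vedge H c M q (col q) (col (Suc q))
    (if Suc q = 2 * n then TAlpha else TBeta) (q = 0))"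
proof -
  interpret transposed: box_model H "c \<circ> transpose_dir" \<alpha> \<beta>0 \<beta>1
    by unfold_locales (rule models_T_box_transpose[OF models_T_box])
  obtain r where r: "r (2 * n) = z"
    "\<forall>p<2 * n. grid_hedge H (c \<circ> transpose_dir) p 0 (r p) (r (Suc p))
      (if p = 0 then TAlpha else TBeta) (Suc p = 2 * n)"
    using transposed.ladder_row[OF ladder, of True n z] west by auto
  show ?thesis
  proof (intro exI[of _ "\<lambda>q. r (2 * n - q)"] conjI allI impI)
    show "r (2 * n - 0) = z"
      using r(1) by simp
  next
    fix q
    assume q: "q < 2 * n"
    define p where "p = 2 * n - Suc q"
    have p: "p < 2 * n" "Suc p = 2 * n - q" "2 * n - Suc q = p"
      using q by (auto simp: p_def)
    have parity: "odd (p + 0) \<longleftrightarrow> even (M + q)"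
      using q \<open>even M\<close> by (auto simp: p_def)
    have "grid_hedge H (c \<circ> transpose_dir) p 0 (r p) (r (Suc p))
      (if p = 0 then TAlpha else TBeta) (Suc p = 2 * n)"
      using r(2) p(1) by blast
    then have "grid_vedge H c M q (r (Suc p)) (r p)
      (if p = 0 then TAlpha else TBeta) (Suc p = 2 * n)"
      unfolding grid_hedge_transpose[OF parity] .
    moreover have "p = 0 \<longleftrightarrow> Suc q = 2 * n" "Suc p = 2 * n \<longleftrightarrow> q = 0"
      using q by (auto simp: p_def)
    ultimately show "grid_vedge H c M q (r (2 * n - q)) (r (2 * n - Suc q))
      (if Suc q = 2 * n then TAlpha else TBeta) (q = 0)"
      using p by simp
  qed
qed

lemma alpha_corner_of_repeated_rung:
  assumes ladder: "ladder H \<alpha> \<beta>0 \<beta>1 xs ys"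
    and repeated: "xs m = xs n" "m \<noteq> n" "0 < m" "0 < n"
  shows "\<exists>a a' b. H (Some (c DN TAlpha False False)) a b \<and> H (Some (c DW TAlpha False False)) a' b"
proof -
  have "H (Some \<beta>0) (xs m) (ys m)"
    using ladder \<open>0 < m\<close> by (auto simp: ladder_def dest: spec[of _ m])
  moreover have "EndRule (Some \<beta>0) (Some \<beta>0)
      (Some (c DN TBeta True True)) (Some (c DW TBeta True True)) \<in> T_box c \<alpha> \<beta>0 \<beta>1"
    by (simp add: T_box_def)
  ultimately obtain z where
    north: "H (Some (c DN TBeta True True)) (xs m) z"
    and "H (Some (c DW TBeta True True)) (xs m) z"
    using end_rule by blast
  then have west: "H (Some (c DW TBeta True True)) (xs n) z"
    using repeated(1) by simp
  define \<theta> where "\<theta> p = (if p = 0 then TAlpha else TBeta)" for p :: nat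
  define \<omega> where "\<omega> q = (if Suc q = 2 * n then TAlpha else TBeta)" for q
  \<comment> \<open>The flag \<open>d\<close> lives on the two antidiagonals through the corner \<open>(2m, 0)\<close>; since
    \<open>m \<noteq> n\<close> it misses the cell at the opposite corner \<open>(0, 2n)\<close>.\<close>
  define D where "D s = (Suc s = 2 * m \<or> s = 2 * m)" for s
  obtain r where r: "r (2 * m) = z" "\<forall>p<2 * m. grid_hedge H c p 0 (r p) (r (Suc p)) (\<theta> p) (D p)"
    using ladder_row[OF ladder north] by (auto simp: \<theta>_def D_def)
  obtain col where col: "col 0 = z"
    "\<forall>q<2 * n. grid_vedge H c (2 * m) q (col q) (col (Suc q)) (\<omega> q) (D (2 * m + q))"
    using ladder_column[OF ladder west, of "2 * m"] by (auto simp: \<omega>_def D_def)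
  obtain g where
    hedges: "\<forall>p<2 * m. \<forall>q\<le>2 * n. grid_hedge H c p q (g p q) (g (Suc p) q) (\<theta> p) (D (p + q))"
    and vedges: "\<forall>p\<le>2 * m. \<forall>q<2 * n. grid_vedge H c p q (g p q) (g p (Suc q)) (\<omega> q) (D (p + q))"
    using tile_rectangle[OF r(2) col(2)] r(1) col(1) by blast
  obtain j where j: "n = Suc j"
    using \<open>0 < n\<close> gr0_implies_Suc by blast
  have "\<not> D (Suc (2 * j))" "\<not> D (2 * n)"
    using \<open>m \<noteq> n\<close> j by (auto simp: D_def)
  then have "H (Some (c DN TAlpha False False)) (g 0 (Suc (2 * j))) (g 0 (2 * n))"
    and "H (Some (c DW TAlpha False False)) (g 1 (2 * n)) (g 0 (2 * n))"
    using vedges[rule_format, of 0 "Suc (2 * j)"] hedges[rule_format, of 0 "2 * n"] \<open>0 < m\<close> j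
    by (simp_all add: grid_vedge_def grid_hedge_def \<theta>_def \<omega>_def)
  then show ?thesis by blast
qed

end

theorem mainTheorem5:
  fixes s \<alpha> \<beta>0 \<beta>1 \<eta>0 \<eta>1 :: nat
    and c :: "dir \<Rightarrow> theta \<Rightarrow> bool \<Rightarrow> bool \<Rightarrow> nat"
  assumes labels: "{\<alpha>, \<beta>0, \<beta>1, \<eta>0, \<eta>1} \<subseteq> {1..s} - {1, 2, 3, 4}"
    and evens: "even \<alpha>" "even \<beta>0" "even \<eta>0"
    and distinct_evens: "\<alpha> \<noteq> \<beta>0" "\<alpha> \<noteq> \<eta>0" "\<beta>0 \<noteq> \<eta>0"
    and odds: "odd \<beta>1" "odd \<eta>1" and distinct_odds: "\<beta>1 \<noteq> \<eta>1"
    and code_inj: "inj c"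
    and code_range: "\<And>x t dl ep. c x t dl ep \<in> {1..s} - {3, 4, \<alpha>, \<beta>0, \<beta>1, \<eta>0, \<eta>1}"
    and code1: "c DN TAlpha False False = 1"
    and code2: "c DW TAlpha False False = 2"
  shows "leads_to_red_spider_on TYPE('v::finite) (T_inf \<alpha> \<beta>0 \<beta>1 \<eta>0 \<eta>1 \<union> T_box c \<alpha> \<beta>0 \<beta>1)"
  unfolding leads_to_red_spider_on_def
proof (intro allI impI)
  fix H :: "label \<Rightarrow> 'v \<Rightarrow> 'v \<Rightarrow> bool"
  assume "models H (T_inf \<alpha> \<beta>0 \<beta>1 \<eta>0 \<eta>1 \<union> T_box c \<alpha> \<beta>0 \<beta>1) \<and> has_empty_edge H"
  then have T_inf: "models H (T_inf \<alpha> \<beta>0 \<beta>1 \<eta>0 \<eta>1)" and T_box: "box_model H c \<alpha> \<beta>0 \<beta>1"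
    and "\<exists>a b. H None a b"
    by (auto simp: models_def box_model_def has_empty_edge_def)
  then obtain xs ys where ladder: "ladder H \<alpha> \<beta>0 \<beta>1 xs ys"
    using ladder_of_empty_edge by metis
  have "\<not> inj (\<lambda>k. xs (Suc k))"
    using finite_imageD[of "\<lambda>k. xs (Suc k)" UNIV] by auto
  then obtain i j where "i \<noteq> j" "xs (Suc i) = xs (Suc j)"
    by (auto simp: inj_def)
  then show "has_12_pattern H"
    using box_model.alpha_corner_of_repeated_rung[OF T_box ladder, of "Suc i" "Suc j"] code1 code2
    by (auto simp: has_12_pattern_def)
qed

end
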